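(* Under the hypotheses of Proposition 2 (invariance $f(x,\mu^0(x))\in S^0$ for all $x\in S^0$, terminal cost $\bar J_{S^0}$, lookahead $\ell\ge1$), for every $x\in X$, writing $x'=f(x,\tilde\mu(x))$, we have $$g(x,\tilde\mu(x))+\tilde J_{S^0}(x')\le \tilde J_{S^0}(x).$$ In particular, if $\tilde J_{S^0}(x)<\infty$ then $\tilde J_{S^0}(x')<\infty$ (recursive feasibility), and $\tilde J_{S^0}$ is nonincreasing along any trajectory generated by the rollout policy $\tilde\mu$.
   Context: Deterministic infinite-horizon problem: arbitrary state space $X$ and control space $U$, dynamics $x_{k+1}=f(x_k,u_k)$ with $f:X\times U\to X$, nonempty control constraint sets $U(x)\subset U$, and stage cost $g(x,u)\in[0,\infty]$ for all $x\in X$, $u\in U(x)$. A stationary policy is a map $\mu:X\to U$ with $\mu(x)\in U(x)$; its cost function is $J_\mu(x_0)=\sum_{k=0}^\infty g(x_k,\mu(x_k))$ with $x_{k+1}=f(x_k,\mu(x_k))$. Assumption: for every $J:X\to[0,\infty]$ and every $x\in X$, $\inf_{u\in U(x)}\{g(x,u)+J(f(x,u))\}$ is attained. Given $S^0\subset X$ and $\mu^0$, $\bar J_{S^0}(x)=J_{\mu^0}(x)$ if $x\in S^0$ and $\infty$ otherwise. With $J_0=\bar J_{S^0}$, $J_{k+1}(x)=\min_{u\in U(x)}\{g(x,u)+J_k(f(x,u))\}$, set $\tilde J_{S^0}=J_\ell$ (the optimal value of minimizing $\sum_{k=0}^{\ell-1}g(x_k,u_k)+\bar J_{S^0}(x_\ell)$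 over $u_k\in U(x_k)$ with $x_0=x$, $x_{k+1}=f(x_k,u_k)$), and the rollout policy $\tilde\mu(x)\in\arg\min_{u\in U(x)}\{g(x,u)+J_{\ell-1}(f(x,u))\}$ (the first control of a minimizing sequence). *)

theory Defs
  imports "HOL-Analysis.Analysis"
begin

text \<open>Deterministic infinite-horizon problem with costs in [0,\<infinity>], modelled by ennreal.
  f : dynamics, U : control constraint sets, g : stage cost.\<close>

definition traj :: "('x \<Rightarrow> 'u \<Rightarrow> 'x) \<Rightarrow> ('x \<Rightarrow> 'u) \<Rightarrow> 'x \<Rightarrow> nat \<Rightarrow> 'x" where
  "traj f mu x0 k = ((\<lambda>x. f x (mu x)) ^^ k) x0"

definition policy_cost ::
  "('x \<Rightarrow> 'u \<Rightarrow> 'x) \<Rightarrow> ('x \<Rightarrow> 'u \<Rightarrow> ennreal) \<Rightarrow> ('x \<Rightarrow> 'u) \<Rightarrow> 'x \<Rightarrow> ennreal" where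
  "policy_cost f g mu x0 = (\<Sum>k. g (traj f mu x0 k) (mu (traj f mu x0 k)))"

definition terminal_cost ::
  "('x \<Rightarrow> 'u \<Rightarrow> 'x) \<Rightarrow> ('x \<Rightarrow> 'u \<Rightarrow> ennreal) \<Rightarrow> 'x set \<Rightarrow> ('x \<Rightarrow> 'u) \<Rightarrow> 'x \<Rightarrow> ennreal" where
  "terminal_cost f g S0 mu0 x = (if x \<in> S0 then policy_cost f g mu0 x else \<infinity>)"

definition bellman ::
  "('x \<Rightarrow> 'u \<Rightarrow> 'x) \<Rightarrow> ('x \<Rightarrow> 'u set) \<Rightarrow> ('x \<Rightarrow> 'u \<Rightarrow> ennreal) \<Rightarrow> ('x \<Rightarrow> ennreal) \<Rightarrow> 'x \<Rightarrow> ennreal" where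
  "bellman f U g J x = (INF u\<in>U x. g x u + J (f x u))"

definition value_iter ::
  "('x \<Rightarrow> 'u \<Rightarrow> 'x) \<Rightarrow> ('x \<Rightarrow> 'u set) \<Rightarrow> ('x \<Rightarrow> 'u \<Rightarrow> ennreal) \<Rightarrow> 'x set \<Rightarrow> ('x \<Rightarrow> 'u)
    \<Rightarrow> nat \<Rightarrow> 'x \<Rightarrow> ennreal" where
  "value_iter f U g S0 mu0 k = (bellman f U g ^^ k) (terminal_cost f g S0 mu0)"

end

theory Submission
  imports Defs
begin

text \<open>Since \<open>\<mu>\<^sup>0\<close> keeps \<open>S\<^sup>0\<close> invariant, the terminal cost satisfies \<open>T J\<^sub>0 \<le> J\<^sub>0\<close> for the
  Bellman operator \<open>T\<close>; monotonicity of \<open>T\<close> propagates this to \<open>J\<^sub>\<ell> \<le> J\<^sub>\<ell>\<^sub>-\<^sub>1\<close>. The rollout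
  control attains \<open>J\<^sub>\<ell>(x) = T J\<^sub>\<ell>\<^sub>-\<^sub>1 (x) = g(x,\<mu>(x)) + J\<^sub>\<ell>\<^sub>-\<^sub>1(x')\<close>, and replacing
  \<open>J\<^sub>\<ell>\<^sub>-\<^sub>1(x')\<close> by the smaller \<open>J\<^sub>\<ell>(x')\<close> gives the cost improvement. Feasibility and
  monotonicity along trajectories follow because stage costs are nonnegative.\<close>

lemma traj_Suc: "traj f mu x0 (Suc k) = f (traj f mu x0 k) (mu (traj f mu x0 k))"
  unfolding traj_def by simp

lemma traj_Suc_right: "traj f mu x0 (Suc k) = traj f mu (f x0 (mu x0)) k"
  unfolding traj_def by (simp add: funpow_Suc_right del: funpow.simps)

lemma suminf_ennreal_split_head:
  fixes h :: "nat \<Rightarrow> ennreal"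
  shows "(\<Sum>k. h k) = h 0 + (\<Sum>k. h (Suc k))"
proof -
  have "(\<lambda>k. h (Suc k)) sums (\<Sum>k. h (Suc k))"
    by (rule summable_sums) (rule summableI)
  then have "h sums ((\<Sum>k. h (Suc k)) + h 0)"
    by (rule sums_Suc)
  then show ?thesis
    by (simp add: sums_unique[symmetric] add.commute)
qed

lemma policy_cost_step: "policy_cost f g mu x = g x (mu x) + policy_cost f g mu (f x (mu x))"
  unfolding policy_cost_def
  by (subst suminf_ennreal_split_head) (simp add: traj_Suc_right, simp add: traj_def)

lemma bellman_mono: "(\<And>y. J y \<le> J' y) \<Longrightarrow> bellman f U g J x \<le> bellman f U g J' x"
  unfolding bellman_def by (rule INF_mono) (meson add_left_mono order_refl)

lemma bellman_le: "u \<in> U x \<Longrightarrow> bellman f U g J x \<le> g x u + J (f x u)"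
  unfolding bellman_def by (rule INF_lower)

lemma bellman_eq_of_argmin:
  assumes "u \<in> U x" and "\<And>v. v \<in> U x \<Longrightarrow> g x u + J (f x u) \<le> g x v + J (f x v)"
  shows "bellman f U g J x = g x u + J (f x u)"
  using assms unfolding bellman_def by (intro antisym INF_lower INF_greatest) auto

lemma bellman_terminal_cost_le:
  assumes "\<And>x. mu0 x \<in> U x" and "\<And>x. x \<in> S0 \<Longrightarrow> f x (mu0 x) \<in> S0"
  shows "bellman f U g (terminal_cost f g S0 mu0) x \<le> terminal_cost f g S0 mu0 x"
proof (cases "x \<in> S0")
  case True
  have "bellman f U g (terminal_cost f g S0 mu0) x
      \<le> g x (mu0 x) + terminal_cost f g S0 mu0 (f x (mu0 x))"
    using assms(1) by (rule bellman_le)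
  also have "\<dots> = terminal_cost f g S0 mu0 x"
    using True assms(2)[OF True] by (simp add: terminal_cost_def policy_cost_step[of f g mu0 x])
  finally show ?thesis .
qed (simp add: terminal_cost_def)

lemma funpow_bellman_Suc_le:
  assumes "\<And>x. bellman f U g J x \<le> J x"
  shows "(bellman f U g ^^ Suc k) J x \<le> (bellman f U g ^^ k) J x"
proof (induction k arbitrary: x)
  case 0
  show ?case using assms by simp
next
  case (Suc k)
  then show ?case by (simp add: bellman_mono)
qed

lemma value_iter_Suc_le:
  assumes "\<And>x. mu0 x \<in> U x" and "\<And>x. x \<in> S0 \<Longrightarrow> f x (mu0 x) \<in> S0"
  shows "value_iter f U g S0 mu0 (Suc k) x \<le> value_iter f U g S0 mu0 k x"
  unfolding value_iter_def
  using bellman_terminal_cost_le[of mu0 U S0 f g] assms by (intro funpow_bellman_Suc_le) blast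

theorem mainTheorem3:
  fixes f :: "'x \<Rightarrow> 'u \<Rightarrow> 'x" and U :: "'x \<Rightarrow> 'u set" and g :: "'x \<Rightarrow> 'u \<Rightarrow> ennreal"
    and S0 :: "'x set" and mu0 mu_t :: "'x \<Rightarrow> 'u" and l :: nat
  assumes U_nonempty: "\<And>x. U x \<noteq> {}"
    and attained: "\<And>(J :: 'x \<Rightarrow> ennreal) x. \<exists>u\<in>U x. \<forall>v\<in>U x. g x u + J (f x u) \<le> g x v + J (f x v)"
    and mu0_adm: "\<And>x. mu0 x \<in> U x"
    and invariant: "\<And>x. x \<in> S0 \<Longrightarrow> f x (mu0 x) \<in> S0"
    and l_pos: "l \<ge> 1"
    and mu_t_adm: "\<And>x. mu_t x \<in> U x"
    and mu_t_argmin: "\<And>x v. v \<in> U x \<Longrightarrow>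
          g x (mu_t x) + value_iter f U g S0 mu0 (l - 1) (f x (mu_t x))
            \<le> g x v + value_iter f U g S0 mu0 (l - 1) (f x v)"
  shows "(\<forall>x. g x (mu_t x) + value_iter f U g S0 mu0 l (f x (mu_t x)) \<le> value_iter f U g S0 mu0 l x)
       \<and> (\<forall>x. value_iter f U g S0 mu0 l x < \<infinity> \<longrightarrow> value_iter f U g S0 mu0 l (f x (mu_t x)) < \<infinity>)
       \<and> (\<forall>x0 k. value_iter f U g S0 mu0 l (traj f mu_t x0 (Suc k)) \<le> value_iter f U g S0 mu0 l (traj f mu_t x0 k))"
proof -
  let ?J = "value_iter f U g S0 mu0"
  obtain m where l: "l = Suc m" using l_pos by (cases l) auto
  have improvement: "g x (mu_t x) + ?J l (f x (mu_t x)) \<le> ?J l x" for x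
  proof -
    have "g x (mu_t x) + ?J l (f x (mu_t x)) \<le> g x (mu_t x) + ?J m (f x (mu_t x))"
      unfolding l using value_iter_Suc_le[of mu0 U S0 f] mu0_adm invariant by (simp add: add_left_mono)
    also have "\<dots> = bellman f U g (?J m) x"
      using mu_t_adm mu_t_argmin by (intro bellman_eq_of_argmin[symmetric]) (auto simp: l)
    also have "\<dots> = ?J l x"
      by (simp add: l value_iter_def)
    finally show ?thesis .
  qed
  have descent: "?J l (f x (mu_t x)) \<le> ?J l x" for x
    using improvement[of x] by (meson add_increasing order_trans zero_le order_refl)
  show ?thesis
    using improvement descent by (auto simp: traj_Suc intro: le_less_trans)
qed

end
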